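(* Let $G$ be a nice graph, $V_4$ the set of vertices of degree at least four in $G$, $\mathcal{P}$ a path partition of $G$ of minimum size, and $\mathcal{P}_4\subseteq\mathcal{P}$ the subfamily of paths that visit at least one vertex of $V_4$. Then $\mathcal{P}_4$ is bull-free.
   Context: All graphs are finite, simple and undirected; subcubic means maximum degree at most $3$. A path partition of $G$ is a collection of pairwise edge-disjoint paths whose edge sets together cover $E(G)$. A pan cycle of $G$ is a cycle containing a unique vertex of degree $3$ in $G$, all its other vertices having degree $2$ in $G$. A bull cycle of $G$ is a cycle containing exactly two vertices of degree $3$ in $G$, all its other vertices having degree $2$ in $G$. A graph is nice if it is connected, not subcubic, has no pan cycles, and all its bull cycles are triangles. A bull triangle is a bull cycle of length three; its two degree-$3$ vertices form a bull-pair. A path is bull-free if its two endpoints do not form a bull-pair; a family of paths is bull-free if each of its paths is. *)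

theory Defs
  imports Main
begin

definition graph :: "'a set \<Rightarrow> 'a set set \<Rightarrow> bool" where
  "graph V E \<longleftrightarrow> finite V \<and> (\<forall>e\<in>E. \<exists>u v. e = {u, v} \<and> u \<noteq> v \<and> u \<in> V \<and> v \<in> V)"

definition degree :: "'a set set \<Rightarrow> 'a \<Rightarrow> nat" where
  "degree E v = card {e \<in> E. v \<in> e}"

definition adj :: "'a set set \<Rightarrow> 'a \<Rightarrow> 'a \<Rightarrow> bool" where
  "adj E u v \<longleftrightarrow> {u, v} \<in> E"

definition connected_graph :: "'a set \<Rightarrow> 'a set set \<Rightarrow> bool" where
  "connected_graph V E \<longleftrightarrow> V \<noteq> {} \<and> (\<forall>u\<in>V. \<forall>v\<in>V. (adj E)\<^sup>*\<^sup>* u v)"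

definition subcubic :: "'a set \<Rightarrow> 'a set set \<Rightarrow> bool" where
  "subcubic V E \<longleftrightarrow> (\<forall>v\<in>V. degree E v \<le> 3)"

definition walk_edges :: "'a list \<Rightarrow> 'a set set" where
  "walk_edges xs = {{xs ! i, xs ! Suc i} | i. Suc i < length xs}"

definition is_path :: "'a set \<Rightarrow> 'a set set \<Rightarrow> 'a list \<Rightarrow> bool" where
  "is_path V E xs \<longleftrightarrow> length xs \<ge> 2 \<and> distinct xs \<and> set xs \<subseteq> V \<and>
     (\<forall>i. Suc i < length xs \<longrightarrow> adj E (xs ! i) (xs ! Suc i))"

definition is_cycle :: "'a set \<Rightarrow> 'a set set \<Rightarrow> 'a list \<Rightarrow> bool" where
  "is_cycle V E xs \<longleftrightarrow> length xs \<ge> 3 \<and> distinct xs \<and> set xs \<subseteq> V \<and>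
     (\<forall>i. Suc i < length xs \<longrightarrow> adj E (xs ! i) (xs ! Suc i)) \<and>
     adj E (last xs) (hd xs)"

definition pan_cycle :: "'a set \<Rightarrow> 'a set set \<Rightarrow> 'a list \<Rightarrow> bool" where
  "pan_cycle V E xs \<longleftrightarrow> is_cycle V E xs \<and>
     card {v \<in> set xs. degree E v = 3} = 1 \<and>
     (\<forall>v\<in>set xs. degree E v = 2 \<or> degree E v = 3)"

definition bull_cycle :: "'a set \<Rightarrow> 'a set set \<Rightarrow> 'a list \<Rightarrow> bool" where
  "bull_cycle V E xs \<longleftrightarrow> is_cycle V E xs \<and>
     card {v \<in> set xs. degree E v = 3} = 2 \<and>
     (\<forall>v\<in>set xs. degree E v = 2 \<or> degree E v = 3)"

definition nice :: "'a set \<Rightarrow> 'a set set \<Rightarrow> bool" where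
  "nice V E \<longleftrightarrow> connected_graph V E \<and> \<not> subcubic V E \<and>
     (\<forall>xs. \<not> pan_cycle V E xs) \<and>
     (\<forall>xs. bull_cycle V E xs \<longrightarrow> length xs = 3)"

definition bull_pair :: "'a set \<Rightarrow> 'a set set \<Rightarrow> 'a \<Rightarrow> 'a \<Rightarrow> bool" where
  "bull_pair V E u v \<longleftrightarrow> (\<exists>xs. bull_cycle V E xs \<and> length xs = 3 \<and>
     u \<noteq> v \<and> u \<in> set xs \<and> v \<in> set xs \<and> degree E u = 3 \<and> degree E v = 3)"

definition bull_free_path :: "'a set \<Rightarrow> 'a set set \<Rightarrow> 'a list \<Rightarrow> bool" where
  "bull_free_path V E p \<longleftrightarrow> \<not> bull_pair V E (hd p) (last p)"

definition path_partition :: "'a set \<Rightarrow> 'a set set \<Rightarrow> 'a list set \<Rightarrow> bool" where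
  "path_partition V E P \<longleftrightarrow> finite P \<and> (\<forall>p\<in>P. is_path V E p) \<and>
     (\<forall>p\<in>P. \<forall>q\<in>P. p \<noteq> q \<longrightarrow> walk_edges p \<inter> walk_edges q = {}) \<and>
     (\<Union>p\<in>P. walk_edges p) = E"

definition min_path_partition :: "'a set \<Rightarrow> 'a set set \<Rightarrow> 'a list set \<Rightarrow> bool" where
  "min_path_partition V E P \<longleftrightarrow> path_partition V E P \<and>
     (\<forall>Q. path_partition V E Q \<longrightarrow> card P \<le> card Q)"

end

(*
  Let p be a path of a minimum path partition whose ends u, v form a bull-pair, and let w be the
  degree-2 vertex of their bull triangle. If p left the triangle, then w would not lie on p and
  the first and last edges of p would leave the triangle; since u and v have degree 3 these are
  the only edges leaving it. So every other path of the partition that uses a triangle edge stays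
  inside the triangle, has at most two edges, and at least two such paths exist. Replacing p and
  them by the two paths w p and w v u gives a smaller path partition. Hence p lies inside the
  triangle, where all degrees are at most 3.
*)
theory Submission
  imports Defs
begin

lemma walk_edges_eq_image: "walk_edges xs = (\<lambda>i. {xs ! i, xs ! Suc i}) ` {..< length xs - 1}"
  unfolding walk_edges_def by auto

lemma walk_edges_singleton [simp]: "walk_edges [a] = {}"
  unfolding walk_edges_def by simp

lemma walk_edges_Cons_Cons: "walk_edges (a # b # xs) = insert {a, b} (walk_edges (b # xs))"
  unfolding walk_edges_eq_image by (simp add: lessThan_Suc_eq_insert_0 image_image)

lemma walk_edges_Cons: "xs \<noteq> [] \<Longrightarrow> walk_edges (a # xs) = insert {a, hd xs} (walk_edges xs)"
  by (cases xs) (simp_all add: walk_edges_Cons_Cons)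

lemma walk_edges_rev: "walk_edges (rev xs) = walk_edges xs"
proof -
  have sub: "walk_edges (rev ys) \<subseteq> walk_edges ys" for ys :: "'a list"
  proof
    fix e assume "e \<in> walk_edges (rev ys)"
    then obtain i where e: "e = {rev ys ! i, rev ys ! Suc i}" and i: "Suc i < length ys"
      unfolding walk_edges_def by auto
    define j where "j = length ys - Suc (Suc i)"
    have "e = {ys ! j, ys ! Suc j}" "Suc j < length ys"
      using e i by (auto simp: rev_nth j_def Suc_diff_Suc insert_commute)
    then show "e \<in> walk_edges ys" unfolding walk_edges_def by blast
  qed
  show ?thesis using sub[of xs] sub[of "rev xs"] by simp
qed

lemma walk_edges_subset_set: "e \<in> walk_edges xs \<Longrightarrow> e \<subseteq> set xs"
  unfolding walk_edges_def by auto

lemma walk_edges_of_distinct: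
  assumes "distinct xs" "e \<in> walk_edges xs"
  obtains a b where "e = {a, b}" "a \<noteq> b" "a \<in> set xs" "b \<in> set xs"
  using assms unfolding walk_edges_def by (auto simp: nth_eq_iff_index_eq)

lemma walk_edges_hdD:
  assumes "distinct xs" "{hd xs, y} \<in> walk_edges xs"
  shows "y = xs ! 1"
proof -
  obtain i where i: "{hd xs, y} = {xs ! i, xs ! Suc i}" "Suc i < length xs"
    using assms(2) unfolding walk_edges_def by auto
  have hd: "hd xs = xs ! 0" using i(2) by (cases xs) auto
  have "xs ! 0 \<noteq> xs ! Suc i" using assms(1) i(2) nth_eq_iff_index_eq[of xs 0 "Suc i"] by fastforce
  then have "xs ! 0 = xs ! i" "y = xs ! Suc i" using i(1) hd by (auto simp: doubleton_eq_iff)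
  then show ?thesis using assms(1) i(2) nth_eq_iff_index_eq[of xs 0 i] by fastforce
qed

lemma card_walk_edges_le: "card (walk_edges xs) \<le> length xs - 1"
  unfolding walk_edges_eq_image by (metis card_image_le card_lessThan finite_lessThan)

lemma card_walk_edges_le_card:
  assumes "distinct xs" "set xs \<subseteq> S" "finite S"
  shows "card (walk_edges xs) \<le> card S - 1"
proof -
  have "length xs \<le> card S"
    using assms by (metis card_mono distinct_card)
  then show ?thesis using card_walk_edges_le[of xs] by linarith
qed

lemma finite_walk_edges: "finite (walk_edges xs)"
  unfolding walk_edges_eq_image by simp

lemma set_subset_if_walk_edges_closed:
  assumes "\<And>e. e \<in> walk_edges xs \<Longrightarrow> e \<inter> S \<noteq> {} \<Longrightarrow> e \<subseteq> S"
    and "x \<in> set xs" "x \<in> S"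
  shows "set xs \<subseteq> S"
  using assms
proof (induction xs arbitrary: x)
  case Nil
  then show ?case by simp
next
  case (Cons a xs)
  show ?case
  proof (cases "xs = []")
    case True
    then show ?thesis using Cons.prems by simp
  next
    case False
    then have edges: "walk_edges (a # xs) = insert {a, hd xs} (walk_edges xs)"
      by (rule walk_edges_Cons)
    have step: "a \<in> S \<longleftrightarrow> hd xs \<in> S"
      using Cons.prems(1)[of "{a, hd xs}"] edges by auto
    have closed: "\<And>e. e \<in> walk_edges xs \<Longrightarrow> e \<inter> S \<noteq> {} \<Longrightarrow> e \<subseteq> S"
      using Cons.prems(1) edges by blast
    have hd_in: "hd xs \<in> set xs" using False by simp
    have "set xs \<subseteq> S"
    proof (cases "x = a")
      case True
      then show ?thesis using Cons.IH[OF closed hd_in] Cons.prems(3) step by simp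
    next
      case False
      then show ?thesis using Cons.IH[OF closed, of x] Cons.prems(2,3) by simp
    qed
    then show ?thesis using step hd_in by auto
  qed
qed

lemma card_UN_walk_edges_le:
  assumes "finite Q" "finite S" "\<And>q. q \<in> Q \<Longrightarrow> distinct q \<and> set q \<subseteq> S"
  shows "card (\<Union>q\<in>Q. walk_edges q) \<le> card Q * (card S - 1)"
proof -
  have "card (\<Union>q\<in>Q. walk_edges q) \<le> (\<Sum>q\<in>Q. card (walk_edges q))"
    using assms(1) by (rule card_UN_le)
  also have "\<dots> \<le> card Q * (card S - 1)"
    using sum_bounded_above[of Q "\<lambda>q. card (walk_edges q)" "card S - 1"]
      card_walk_edges_le_card assms(2,3) by force
  finally show ?thesis .
qed

lemma is_path_iff_walk_edges:
  "is_path V E xs \<longleftrightarrow> 2 \<le> length xs \<and> distinct xs \<and> set xs \<subseteq> V \<and> walk_edges xs \<subseteq> E"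
  unfolding is_path_def walk_edges_def adj_def by auto

lemma is_path_rev: "is_path V E (rev xs) \<longleftrightarrow> is_path V E xs"
  by (simp add: is_path_iff_walk_edges walk_edges_rev)

lemma is_path_Cons:
  assumes "is_path V E xs" "x \<in> V" "x \<notin> set xs" "{x, hd xs} \<in> E"
  shows "is_path V E (x # xs)"
proof -
  have "xs \<noteq> []" using assms(1) by (auto simp: is_path_def)
  then show ?thesis using assms by (auto simp: is_path_iff_walk_edges walk_edges_Cons)
qed

lemma edge_subset_vertices: "graph V E \<Longrightarrow> e \<in> E \<Longrightarrow> e \<subseteq> V"
  unfolding graph_def by auto

lemma finite_edges:
  assumes "graph V E"
  shows "finite E"
proof -
  have "E \<subseteq> Pow V" "finite V"
    using assms edge_subset_vertices unfolding graph_def by auto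
  then show ?thesis by (simp add: finite_subset)
qed

lemma incident_edges_eq_if_card:
  assumes "finite E" "A \<subseteq> {e \<in> E. x \<in> e}" "card A = degree E x"
  shows "{e \<in> E. x \<in> e} = A"
  using assms card_subset_eq[of "{e \<in> E. x \<in> e}" A] unfolding degree_def by simp

lemma path_partitionD:
  assumes "path_partition V E P"
  shows "finite P" "\<And>q. q \<in> P \<Longrightarrow> is_path V E q"
    and "\<And>q r. q \<in> P \<Longrightarrow> r \<in> P \<Longrightarrow> q \<noteq> r \<Longrightarrow> walk_edges q \<inter> walk_edges r = {}"
    and "(\<Union>q\<in>P. walk_edges q) = E"
  using assms unfolding path_partition_def by (elim conjE; blast)+

lemma path_partition_replace:
  assumes partition: "path_partition V E P" and "R \<subseteq> P" "finite R'"
    and paths: "\<forall>q\<in>R'. is_path V E q"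
    and disjoint: "\<forall>q\<in>R'. \<forall>r\<in>R'. q \<noteq> r \<longrightarrow> walk_edges q \<inter> walk_edges r = {}"
    and same_edges: "(\<Union>q\<in>R'. walk_edges q) = (\<Union>q\<in>R. walk_edges q)"
  shows "path_partition V E (P - R \<union> R')"
proof -
  have old_disjoint: "walk_edges q \<inter> walk_edges r = {}" if "q \<in> P - R" "r \<in> R'" for q r
  proof -
    have "walk_edges r \<subseteq> (\<Union>s\<in>R. walk_edges s)"
      using same_edges \<open>r \<in> R'\<close> by auto
    moreover have "walk_edges q \<inter> walk_edges s = {}" if "s \<in> R" for s
      using path_partitionD(3)[OF partition] \<open>q \<in> P - R\<close> \<open>R \<subseteq> P\<close> that by auto
    ultimately show ?thesis by auto
  qed
  show ?thesis
    unfolding path_partition_def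
  proof (intro conjI)
    show "finite (P - R \<union> R')"
      using path_partitionD(1)[OF partition] \<open>finite R'\<close> by simp
    show "\<forall>q\<in>P - R \<union> R'. is_path V E q"
      using path_partitionD(2)[OF partition] paths by blast
    show "\<forall>q\<in>P - R \<union> R'. \<forall>r\<in>P - R \<union> R'. q \<noteq> r \<longrightarrow> walk_edges q \<inter> walk_edges r = {}"
      using path_partitionD(3)[OF partition] disjoint old_disjoint by (metis DiffE Int_commute UnE)
    have "(\<Union>q\<in>P - R \<union> R'. walk_edges q) = (\<Union>q\<in>P. walk_edges q)"
      using same_edges \<open>R \<subseteq> P\<close> by auto
    then show "(\<Union>q\<in>P - R \<union> R'. walk_edges q) = E"
      using path_partitionD(4)[OF partition] by simp
  qed
qed

lemma card_replace_less:
  assumes "finite P" "R \<subseteq> P" "card R' < card R"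
  shows "card (P - R \<union> R') < card P"
proof -
  have "card (P - R \<union> R') \<le> card (P - R) + card R'"
    by (rule card_Un_le)
  also have "card (P - R) = card P - card R"
    using assms(1,2) by (simp add: card_Diff_subset finite_subset)
  finally show ?thesis
    using assms card_mono[OF assms(1,2)] by linarith
qed

lemma is_cycle_triangle_edges:
  assumes "is_cycle V E [a, b, c]"
  shows "distinct [a, b, c]" "{a, b} \<in> E" "{b, c} \<in> E" "{a, c} \<in> E"
proof -
  have adj: "\<forall>i. Suc i < 3 \<longrightarrow> adj E ([a, b, c] ! i) ([a, b, c] ! Suc i)" "adj E c a"
    using assms unfolding is_cycle_def by simp_all
  show "distinct [a, b, c]" using assms unfolding is_cycle_def by blast
  show "{a, b} \<in> E" using adj(1)[rule_format, of 0] unfolding adj_def by simp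
  show "{b, c} \<in> E" using adj(1)[rule_format, of 1] unfolding adj_def by simp
  show "{a, c} \<in> E" using adj(2) unfolding adj_def by (simp add: insert_commute)
qed

lemma bull_pairE:
  assumes "bull_pair V E u v"
  obtains w where "{u, v} \<in> E" "{u, w} \<in> E" "{v, w} \<in> E" "u \<noteq> v" "w \<noteq> u" "w \<noteq> v"
    "degree E u = 3" "degree E v = 3" "degree E w = 2"
proof -
  obtain xs where bull: "bull_cycle V E xs" "length xs = 3" and "u \<noteq> v"
    and uv_in: "u \<in> set xs" "v \<in> set xs" and deg_uv: "degree E u = 3" "degree E v = 3"
    using assms unfolding bull_pair_def by blast
  obtain a b c where xs: "xs = [a, b, c]"
    using bull(2) by (auto simp: numeral_3_eq_3 length_Suc_conv)
  have three: "card {y \<in> {a, b, c}. degree E y = 3} = 2"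
    and deg23: "\<forall>y\<in>{a, b, c}. degree E y = 2 \<or> degree E y = 3"
    using bull(1) unfolding xs bull_cycle_def by simp_all
  have cycle: "is_cycle V E [a, b, c]"
    using bull(1) unfolding xs bull_cycle_def by simp
  have edges: "{x, y} \<in> E" if "x \<in> {a, b, c}" "y \<in> {a, b, c}" "x \<noteq> y" for x y
    using that is_cycle_triangle_edges[OF cycle] by (auto simp: insert_commute)
  have "card {u, v} < card {a, b, c}"
    using \<open>u \<noteq> v\<close> is_cycle_triangle_edges(1)[OF cycle] by simp
  then obtain w where w: "w \<in> {a, b, c}" "w \<notin> {u, v}"
    by (metis card_mono finite.emptyI finite.insertI subsetI not_le)
  have "degree E w \<noteq> 3"
  proof
    assume "degree E w = 3"
    then have "{u, v, w} \<subseteq> {y \<in> {a, b, c}. degree E y = 3}"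
      using uv_in deg_uv w unfolding xs by auto
    then have "card {u, v, w} \<le> 2"
      using three card_mono[of "{y \<in> {a, b, c}. degree E y = 3}" "{u, v, w}"] by simp
    then show False using \<open>u \<noteq> v\<close> w(2) by (auto simp: card_insert_if)
  qed
  then have "degree E w = 2" using deg23 w(1) by blast
  moreover have "u \<in> {a, b, c}" "v \<in> {a, b, c}" using uv_in unfolding xs by simp_all
  ultimately show thesis
    using that \<open>u \<noteq> v\<close> w edges deg_uv by blast
qed

lemma is_path_eq_if_inner_vertex_adjacent_only_to_ends:
  assumes path: "is_path V E p" and "hd p = u" "last p = v"
    and "w \<in> set p" "w \<noteq> u" "w \<noteq> v"
    and neighbours: "\<And>y. {w, y} \<in> E \<Longrightarrow> y = u \<or> y = v"
  shows "p = [u, w, v]"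
proof -
  define n where "n = length p"
  have "2 \<le> n" "distinct p" and edge: "\<And>i. Suc i < n \<Longrightarrow> {p ! i, p ! Suc i} \<in> E"
    using path unfolding is_path_def adj_def n_def by auto
  then have "p \<noteq> []" unfolding n_def by auto
  then have first: "p ! 0 = u" and last: "p ! (n - 1) = v"
    using \<open>hd p = u\<close> \<open>last p = v\<close> unfolding n_def by (simp_all add: hd_conv_nth last_conv_nth)
  have ends: "j = 0 \<or> j = n - 1" if "j < n" "p ! j = u \<or> p ! j = v" for j
    using that first last \<open>distinct p\<close> \<open>p \<noteq> []\<close> nth_eq_iff_index_eq[of p j 0]
      nth_eq_iff_index_eq[of p j "n - 1"] unfolding n_def by auto
  obtain i where i: "i < n" "p ! i = w"
    using \<open>w \<in> set p\<close> unfolding n_def by (auto simp: in_set_conv_nth)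
  have "i \<noteq> 0" "i \<noteq> n - 1"
    using i first last \<open>w \<noteq> u\<close> \<open>w \<noteq> v\<close> by metis+
  have "i - 1 = 0 \<or> i - 1 = n - 1"
    using ends[of "i - 1"] neighbours[of "p ! (i - 1)"] edge[of "i - 1"] i \<open>i \<noteq> 0\<close>
    by (simp add: insert_commute)
  moreover have "Suc i = 0 \<or> Suc i = n - 1"
    using ends[of "Suc i"] neighbours[of "p ! Suc i"] edge[of i] i \<open>i \<noteq> n - 1\<close> by simp
  ultimately have "i = 1" "n = 3"
    using i(1) \<open>i \<noteq> 0\<close> by auto
  then show ?thesis
    using first last i unfolding n_def
    by (auto intro!: nth_equalityI simp: less_Suc_eq numeral_3_eq_3)
qed

locale bull_triangle_path =
  fixes V :: "'a set" and E :: "'a set set" and p :: "'a list" and u v w :: 'a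
  assumes graph: "graph V E"
    and path: "is_path V E p" and hd_path: "hd p = u" and last_path: "last p = v"
    and edge_uv: "{u, v} \<in> E" and edge_uw: "{u, w} \<in> E" and edge_vw: "{v, w} \<in> E"
    and u_ne_v: "u \<noteq> v" and w_ne_u: "w \<noteq> u" and w_ne_v: "w \<noteq> v"
    and degree_u: "degree E u = 3" and degree_v: "degree E v = 3" and degree_w: "degree E w = 2"
    and leaves_triangle: "\<not> set p \<subseteq> {u, v, w}"
begin

abbreviation triangle_edges :: "'a set set" where
  "triangle_edges \<equiv> {{u, v}, {u, w}, {v, w}}"

abbreviation other_triangle_paths :: "'a list set \<Rightarrow> 'a list set" where
  "other_triangle_paths P \<equiv> {q \<in> P - {p}. walk_edges q \<inter> triangle_edges \<noteq> {}}"

lemma bull_triangle_path_rev: "bull_triangle_path V E (rev p) v u w"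
  using graph path hd_path last_path edge_uv edge_uw edge_vw u_ne_v w_ne_u w_ne_v
    degree_u degree_v degree_w leaves_triangle
  by unfold_locales (auto simp: is_path_rev hd_rev last_rev insert_commute)

lemma finite_E: "finite E"
  using graph by (rule finite_edges)

lemma distinct_path: "distinct p"
  using path unfolding is_path_def by blast

lemma walk_edges_path: "walk_edges p \<subseteq> E"
  using path by (simp add: is_path_iff_walk_edges)

lemma incident_edges_w: "{e \<in> E. w \<in> e} = {{u, w}, {v, w}}"
proof (rule incident_edges_eq_if_card[OF finite_E])
  show "{{u, w}, {v, w}} \<subseteq> {e \<in> E. w \<in> e}"
    using edge_uw edge_vw by simp
  show "card {{u, w}, {v, w}} = degree E w"
    using u_ne_v degree_w by (auto simp: doubleton_eq_iff card_insert_if)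
qed

lemma w_notin_path: "w \<notin> set p"
proof
  assume "w \<in> set p"
  have "y = u \<or> y = v" if "{w, y} \<in> E" for y
  proof -
    have "{w, y} \<in> {e \<in> E. w \<in> e}" using that by simp
    then have "{w, y} \<in> {{u, w}, {v, w}}" unfolding incident_edges_w .
    then show ?thesis by (auto simp: doubleton_eq_iff)
  qed
  then have "p = [u, w, v]"
    using is_path_eq_if_inner_vertex_adjacent_only_to_ends[OF path hd_path last_path \<open>w \<in> set p\<close>]
      w_ne_u w_ne_v by blast
  then show False using leaves_triangle by auto
qed

lemma length_path_ge_3: "3 \<le> length p"
proof (rule ccontr)
  assume "\<not> 3 \<le> length p"
  then have "length p = 2" using path unfolding is_path_def by simp
  then have "p = [u, v]"
    using hd_path last_path by (auto simp: numeral_2_eq_2 length_Suc_conv)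
  then show False using leaves_triangle by auto
qed

lemma second_vertex_ne_v: "p ! 1 \<noteq> v"
proof -
  have "p \<noteq> []" using length_path_ge_3 by auto
  then have "v = p ! (length p - 1)" using last_path by (simp add: last_conv_nth)
  then show ?thesis
    using distinct_path length_path_ge_3 nth_eq_iff_index_eq[of p 1 "length p - 1"] by auto
qed

lemma edge_uv_notin_path: "{u, v} \<notin> walk_edges p"
  using walk_edges_hdD[OF distinct_path] hd_path second_vertex_ne_v by blast

lemma incident_edges_u: "{e \<in> E. u \<in> e} \<subseteq> {{u, v}, {u, w}} \<union> walk_edges p"
proof -
  have "{p ! 0, p ! 1} \<in> walk_edges p"
    using length_path_ge_3 unfolding walk_edges_def by force
  moreover have "p ! 0 = u"
    using length_path_ge_3 hd_path by (cases p) auto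
  ultimately have first_edge: "{u, p ! 1} \<in> walk_edges p" by simp
  have "p ! 1 \<noteq> w"
    using w_notin_path length_path_ge_3 by auto
  then have "{e \<in> E. u \<in> e} = {{u, v}, {u, w}, {u, p ! 1}}"
    using finite_E edge_uv edge_uw first_edge walk_edges_path degree_u second_vertex_ne_v w_ne_v
    by (intro incident_edges_eq_if_card) (auto simp: card_insert_if doubleton_eq_iff)
  then show ?thesis using first_edge by auto
qed

lemma edge_meeting_triangle:
  assumes "e \<in> E" "e \<inter> {u, v, w} \<noteq> {}"
  shows "e \<in> triangle_edges \<union> walk_edges p"
  using assms incident_edges_u incident_edges_w
    bull_triangle_path.incident_edges_u[OF bull_triangle_path_rev]
  by (auto simp: walk_edges_rev insert_commute)

lemma other_triangle_path_within:
  assumes "path_partition V E P" "p \<in> P" "q \<in> other_triangle_paths P"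
  shows "distinct q" "set q \<subseteq> {u, v, w}" "walk_edges q \<subseteq> triangle_edges"
proof -
  have q: "is_path V E q" "walk_edges q \<inter> walk_edges p = {}"
    using assms path_partitionD(2,3)[OF assms(1)] by blast+
  then show "distinct q" unfolding is_path_def by blast
  obtain e where "e \<in> walk_edges q" "e \<in> triangle_edges"
    using assms(3) by blast
  then obtain x where x: "x \<in> set q" "x \<in> {u, v, w}"
    using walk_edges_subset_set by fastforce
  show within: "set q \<subseteq> {u, v, w}"
  proof (rule set_subset_if_walk_edges_closed[OF _ x])
    fix e assume e: "e \<in> walk_edges q" "e \<inter> {u, v, w} \<noteq> {}"
    have "e \<in> E" using e(1) q(1) by (auto simp: is_path_iff_walk_edges)
    then have "e \<in> triangle_edges"
      using edge_meeting_triangle[OF _ e(2)] e(1) q(2) by blast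
    then show "e \<subseteq> {u, v, w}" by auto
  qed
  show "walk_edges q \<subseteq> triangle_edges"
    using within \<open>distinct q\<close> by (auto elim!: walk_edges_of_distinct)
qed

lemma UN_other_triangle_paths:
  assumes "path_partition V E P" "p \<in> P"
  shows "(\<Union>q\<in>other_triangle_paths P. walk_edges q) = triangle_edges"
proof
  show "(\<Union>q\<in>other_triangle_paths P. walk_edges q) \<subseteq> triangle_edges"
    using other_triangle_path_within[OF assms] by blast
  have "{u, w} \<notin> walk_edges p" "{v, w} \<notin> walk_edges p"
    using w_notin_path walk_edges_subset_set by blast+
  then have disjoint: "triangle_edges \<inter> walk_edges p = {}"
    using edge_uv_notin_path by auto
  have cover: "triangle_edges \<subseteq> (\<Union>q\<in>P. walk_edges q)"
    unfolding path_partitionD(4)[OF assms(1)] using edge_uv edge_uw edge_vw by blast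
  show "triangle_edges \<subseteq> (\<Union>q\<in>other_triangle_paths P. walk_edges q)"
  proof
    fix t assume t: "t \<in> triangle_edges"
    then obtain q where q: "q \<in> P" "t \<in> walk_edges q"
      using cover by blast
    moreover have "q \<noteq> p"
      using disjoint t q(2) by auto
    ultimately show "t \<in> (\<Union>q\<in>other_triangle_paths P. walk_edges q)"
      using t by auto
  qed
qed

lemma card_other_triangle_paths:
  assumes "path_partition V E P" "p \<in> P"
  shows "2 \<le> card (other_triangle_paths P)"
proof -
  have "finite (other_triangle_paths P)"
    using path_partitionD(1)[OF assms(1)] by simp
  have "3 = card triangle_edges"
    using u_ne_v w_ne_u w_ne_v by (auto simp: doubleton_eq_iff card_insert_if)
  also have "\<dots> = card (\<Union>q\<in>other_triangle_paths P. walk_edges q)"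
    using UN_other_triangle_paths[OF assms] by simp
  also have "\<dots> \<le> card (other_triangle_paths P) * (card {u, v, w} - 1)"
    using \<open>finite (other_triangle_paths P)\<close> other_triangle_path_within[OF assms]
    by (intro card_UN_walk_edges_le) auto
  also have "\<dots> = card (other_triangle_paths P) * 2"
    using u_ne_v w_ne_u w_ne_v by (auto simp: card_insert_if)
  finally show ?thesis by linarith
qed

lemma rerouted_paths:
  shows "is_path V E (w # p)" "is_path V E [w, v, u]"
    and "walk_edges (w # p) \<inter> walk_edges [w, v, u] = {}"
    and "walk_edges (w # p) \<union> walk_edges [w, v, u] = triangle_edges \<union> walk_edges p"
proof -
  have "p \<noteq> []" using length_path_ge_3 by auto
  then have edges: "walk_edges (w # p) = insert {u, w} (walk_edges p)"
    using hd_path by (simp add: walk_edges_Cons insert_commute)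
  have "w \<in> V"
    using edge_subset_vertices[OF graph edge_uw] by simp
  have "u \<in> V" "v \<in> V"
    using edge_subset_vertices[OF graph edge_uv] by simp_all
  show "is_path V E (w # p)"
    using is_path_Cons[OF path \<open>w \<in> V\<close> w_notin_path] edge_uw hd_path by (simp add: insert_commute)
  have three: "walk_edges [w, v, u] = {{v, w}, {u, v}}"
    by (simp add: walk_edges_Cons_Cons insert_commute)
  then show "is_path V E [w, v, u]"
    using \<open>w \<in> V\<close> \<open>u \<in> V\<close> \<open>v \<in> V\<close> edge_uv edge_vw w_ne_u w_ne_v u_ne_v
    by (auto simp: is_path_iff_walk_edges)
  have "{v, w} \<notin> walk_edges p"
    using w_notin_path walk_edges_subset_set by blast
  then show "walk_edges (w # p) \<inter> walk_edges [w, v, u] = {}"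
    using edges three edge_uv_notin_path u_ne_v w_ne_v by (auto simp: doubleton_eq_iff)
  show "walk_edges (w # p) \<union> walk_edges [w, v, u] = triangle_edges \<union> walk_edges p"
    using edges three by auto
qed

lemma exists_smaller_path_partition:
  assumes "path_partition V E P" "p \<in> P"
  shows "\<exists>P'. path_partition V E P' \<and> card P' < card P"
proof -
  let ?R = "insert p (other_triangle_paths P)"
  let ?R' = "{w # p, [w, v, u]}"
  have "?R \<subseteq> P" using assms(2) by blast
  have "path_partition V E (P - ?R \<union> ?R')"
  proof (rule path_partition_replace[OF assms(1) \<open>?R \<subseteq> P\<close>])
    show "finite ?R'" by simp
    show "\<forall>q\<in>?R'. is_path V E q"
      using rerouted_paths(1,2) by blast
    show "\<forall>q\<in>?R'. \<forall>r\<in>?R'. q \<noteq> r \<longrightarrow> walk_edges q \<inter> walk_edges r = {}"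
      using rerouted_paths(3) by auto
    show "(\<Union>q\<in>?R'. walk_edges q) = (\<Union>q\<in>?R. walk_edges q)"
      using rerouted_paths(4) UN_other_triangle_paths[OF assms] by auto
  qed
  moreover have "card (P - ?R \<union> ?R') < card P"
  proof (rule card_replace_less[OF _ \<open>?R \<subseteq> P\<close>])
    show "finite P" using path_partitionD(1)[OF assms(1)] .
    then have "card ?R = card (other_triangle_paths P) + 1" by simp
    moreover have "card ?R' \<le> 2" by (auto simp: card_insert_if)
    ultimately show "card ?R' < card ?R"
      using card_other_triangle_paths[OF assms] by linarith
  qed
  ultimately show ?thesis by blast
qed

end

lemma min_path_partition_path_within_bull_triangle:
  assumes "graph V E" "min_path_partition V E P" "p \<in> P" "hd p = u" "last p = v"
    and "{u, v} \<in> E" "{u, w} \<in> E" "{v, w} \<in> E" "u \<noteq> v" "w \<noteq> u" "w \<noteq> v"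
    and "degree E u = 3" "degree E v = 3" "degree E w = 2"
  shows "set p \<subseteq> {u, v, w}"
proof (rule ccontr)
  assume "\<not> set p \<subseteq> {u, v, w}"
  moreover have "is_path V E p"
    using assms(2,3) path_partitionD(2) unfolding min_path_partition_def by blast
  ultimately interpret bull_triangle_path V E p u v w
    using assms by unfold_locales
  show False
    using exists_smaller_path_partition assms(2,3) unfolding min_path_partition_def
    by (meson not_le)
qed

theorem lemma10:
  fixes V :: "'a set" and E :: "'a set set" and P :: "'a list set"
  assumes "graph V E"
    and "nice V E"
    and "min_path_partition V E P"
  shows "\<forall>p \<in> {p \<in> P. \<exists>v \<in> set p. v \<in> V \<and> degree E v \<ge> 4}. bull_free_path V E p"
proof
  fix p assume "p \<in> {p \<in> P. \<exists>v \<in> set p. v \<in> V \<and> degree E v \<ge> 4}"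
  then obtain x where "p \<in> P" "x \<in> set p" "4 \<le> degree E x" by blast
  show "bull_free_path V E p"
    unfolding bull_free_path_def
  proof
    assume "bull_pair V E (hd p) (last p)"
    then obtain w where triangle: "{hd p, last p} \<in> E" "{hd p, w} \<in> E" "{last p, w} \<in> E"
      "hd p \<noteq> last p" "w \<noteq> hd p" "w \<noteq> last p"
      and degrees: "degree E (hd p) = 3" "degree E (last p) = 3" "degree E w = 2"
      by (rule bull_pairE)
    have "set p \<subseteq> {hd p, last p, w}"
      using min_path_partition_path_within_bull_triangle[OF assms(1,3) \<open>p \<in> P\<close> refl refl
          triangle degrees] .
    then show False
      using \<open>x \<in> set p\<close> \<open>4 \<le> degree E x\<close> degrees by auto
  qed
qed

end
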